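(* Let $G=(V,E)$ be a finite Eulerian graph (every vertex has even degree). For $\underline{r}=(r_v)_{v\in V}\in\mathbb{Z}^V$ let $\varepsilon_{\underline{r}}(G)$ be the number of orientations of $G$ in which every vertex $v$ has in-degree exactly $r_v$. Then $\varepsilon_{\underline{r}}(G)$ is maximal (over all $\underline{r}\in\mathbb{Z}^V$) when $r_v=d_G(v)/2$ for every vertex $v$; that is, $\varepsilon_{\underline{r}}(G)\leq \varepsilon(G)$ for every $\underline{r}\in\mathbb{Z}^V$, where $\varepsilon(G)$ is the number of Eulerian orientations of $G$.
   Context: An Eulerian orientation is an orientation in which every vertex has in-degree equal to out-degree, i.e. in-degree $d_G(v)/2$ at each vertex $v$. *)

theory Defs
  imports "HOL-Library.FuncSet"
begin

definition simple_graph :: "'a set \<Rightarrow> 'a set set \<Rightarrow> bool" where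
  "simple_graph V E \<longleftrightarrow> finite V \<and> (\<forall>e\<in>E. e \<subseteq> V \<and> card e = 2)"

definition degree :: "'a set set \<Rightarrow> 'a \<Rightarrow> nat" where
  "degree E v = card {e\<in>E. v \<in> e}"

text \<open>An orientation assigns to each edge its head (an endpoint of that edge).\<close>
definition orientations :: "'a set set \<Rightarrow> ('a set \<Rightarrow> 'a) set" where
  "orientations E = (\<Pi>\<^sub>E e\<in>E. e)"

definition indeg :: "'a set set \<Rightarrow> ('a set \<Rightarrow> 'a) \<Rightarrow> 'a \<Rightarrow> nat" where
  "indeg E \<sigma> v = card {e\<in>E. \<sigma> e = v}"

definition eps_r :: "'a set \<Rightarrow> 'a set set \<Rightarrow> ('a \<Rightarrow> int) \<Rightarrow> nat" where
  "eps_r V E r = card {\<sigma> \<in> orientations E. \<forall>v\<in>V. int (indeg E \<sigma> v) = r v}"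

definition eps :: "'a set \<Rightarrow> 'a set set \<Rightarrow> nat" where
  "eps V E = card {\<sigma> \<in> orientations E. \<forall>v\<in>V. 2 * indeg E \<sigma> v = degree E v}"

end

theory Submission
  imports Defs
begin

text \<open>
  Let \<open>A\<^sub>b(E)\<close> be the set of orientations in which every vertex \<open>v\<close> has in-degree
  \<open>d(v)/2 + b(v)\<close>, so that \<open>\<epsilon>\<^sub>r = |A\<^sub>b(E)|\<close> for \<open>b = r - d/2\<close> and \<open>\<epsilon> = |A\<^sub>0(E)|\<close>. Reversing every
  edge maps \<open>A\<^sub>b\<close> onto \<open>A\<^sub>-\<^sub>b\<close>, so \<open>|A\<^sub>b|\<^sup>2 = |A\<^sub>b| |A\<^sub>-\<^sub>b|\<close>. A pair \<open>(\<sigma>, \<rho>)\<close> of orientations is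
  determined by the set \<open>H\<close> of edges on which they disagree, their common restriction \<open>\<omega>\<close> to
  \<open>E - H\<close> and the restriction \<open>\<eta>\<close> of \<open>\<sigma>\<close> to \<open>H\<close>; the pair lies in \<open>A\<^sub>b \<times> A\<^sub>-\<^sub>b\<close> iff
  \<open>\<omega> \<in> A\<^sub>0(E - H)\<close> and \<open>\<eta> \<in> A\<^sub>b(H)\<close>. Hence \<open>|A\<^sub>b(E)|\<^sup>2 = \<Sum>\<^sub>H |A\<^sub>0(E - H)| |A\<^sub>b(H)|\<close>, where \<open>H = E\<close>
  contributes \<open>|A\<^sub>b(E)|\<close>. If \<open>A\<^sub>0(E - H)\<close> is nonempty, \<open>H\<close> is again Eulerian, so by induction on
  the number of edges every other term is at most the corresponding term for \<open>b = 0\<close>. Thus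
  \<open>|A\<^sub>b|\<^sup>2 - |A\<^sub>b| \<le> |A\<^sub>0|\<^sup>2 - |A\<^sub>0|\<close>, and since an Eulerian graph has an Eulerian orientation,
  \<open>|A\<^sub>0| \<ge> 1\<close> and therefore \<open>|A\<^sub>b| \<le> |A\<^sub>0|\<close>.
\<close>

lemma card_2_Diff_singleton:
  assumes "card e = 2" "x \<in> e"
  shows "e - {x} = {the_elem (e - {x})}"
proof -
  obtain a b where "e = {a, b}" "a \<noteq> b"
    using assms(1) by (meson card_2_iff)
  with assms(2) have "e - {x} = {if x = a then b else a}" by auto
  then show ?thesis by simp
qed

lemma orientationsD: "\<sigma> \<in> orientations E \<Longrightarrow> e \<in> E \<Longrightarrow> \<sigma> e \<in> e"
  unfolding orientations_def by auto

lemma orientations_undefined: "\<sigma> \<in> orientations E \<Longrightarrow> e \<notin> E \<Longrightarrow> \<sigma> e = undefined"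
  unfolding orientations_def by auto

lemma finite_orientations: "finite E \<Longrightarrow> \<forall>e\<in>E. finite e \<Longrightarrow> finite (orientations E)"
  unfolding orientations_def by (simp add: finite_PiE)

lemma override_on_orientations:
  assumes "H \<subseteq> E" "\<omega> \<in> orientations (E - H)" "\<eta> \<in> orientations H"
  shows "override_on \<omega> \<eta> H \<in> orientations E"
  using assms unfolding orientations_def override_on_def by (auto simp: PiE_iff extensional_def)

lemma indeg_cong: "(\<And>e. e \<in> F \<Longrightarrow> \<sigma> e = \<tau> e) \<Longrightarrow> indeg F \<sigma> v = indeg F \<tau> v"
  unfolding indeg_def by (metis (mono_tags, lifting))

lemma indeg_Un:
  "finite A \<Longrightarrow> finite B \<Longrightarrow> A \<inter> B = {} \<Longrightarrow> indeg (A \<union> B) \<sigma> v = indeg A \<sigma> v + indeg B \<sigma> v"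
  unfolding indeg_def by (subst card_Un_disjoint[symmetric]) (auto intro!: arg_cong[where f = card])

lemma degree_Un:
  "finite A \<Longrightarrow> finite B \<Longrightarrow> A \<inter> B = {} \<Longrightarrow> degree (A \<union> B) v = degree A v + degree B v"
  unfolding degree_def by (subst card_Un_disjoint[symmetric]) (auto intro!: arg_cong[where f = card])

lemma indeg_insert:
  "finite F \<Longrightarrow> e \<notin> F \<Longrightarrow> indeg (insert e F) \<sigma> v = (if \<sigma> e = v then 1 else 0) + indeg F \<sigma> v"
proof -
  assume "finite F" "e \<notin> F"
  moreover have "{g \<in> insert e F. \<sigma> g = v} = (if \<sigma> e = v then insert e {g \<in> F. \<sigma> g = v} else {g \<in> F. \<sigma> g = v})"
    by auto
  ultimately show ?thesis unfolding indeg_def by simp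
qed

lemma degree_insert:
  "finite F \<Longrightarrow> e \<notin> F \<Longrightarrow> degree (insert e F) v = (if v \<in> e then 1 else 0) + degree F v"
proof -
  assume "finite F" "e \<notin> F"
  moreover have "{g \<in> insert e F. v \<in> g} = (if v \<in> e then insert e {g \<in> F. v \<in> g} else {g \<in> F. v \<in> g})"
    by auto
  ultimately show ?thesis unfolding degree_def by simp
qed

lemma degree_Diff:
  "finite E \<Longrightarrow> H \<subseteq> E \<Longrightarrow> degree E v = degree H v + degree (E - H) v"
  using degree_Un[of H "E - H" v] by (simp add: Un_absorb1 finite_subset)

lemma indeg_override_on:
  assumes "finite E" "H \<subseteq> E"
  shows "indeg E (override_on \<omega> \<eta> H) v = indeg (E - H) \<omega> v + indeg H \<eta> v"
proof -
  have "E = (E - H) \<union> H"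
    using assms(2) by auto
  then have "indeg E (override_on \<omega> \<eta> H) v = indeg (E - H) (override_on \<omega> \<eta> H) v + indeg H (override_on \<omega> \<eta> H) v"
    using assms indeg_Un[of "E - H" H] by (metis Diff_disjoint Int_commute finite_Diff finite_subset)
  also have "\<dots> = indeg (E - H) \<omega> v + indeg H \<eta> v"
    by (intro arg_cong2[where f = "(+)"] indeg_cong) auto
  finally show ?thesis .
qed

lemma restrict_orientations: "\<sigma> \<in> orientations E \<Longrightarrow> F \<subseteq> E \<Longrightarrow> restrict \<sigma> F \<in> orientations F"
  unfolding orientations_def by auto

lemma simple_graph_finite_edges: "simple_graph V E \<Longrightarrow> finite E"
  unfolding simple_graph_def by (metis Pow_iff finite_Pow_iff finite_subset subsetI)

section \<open>Reversing an orientation\<close>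

definition reverse_on :: "'a set set \<Rightarrow> ('a set \<Rightarrow> 'a) \<Rightarrow> 'a set \<Rightarrow> 'a" where
  "reverse_on H \<eta> = restrict (\<lambda>e. the_elem (e - {\<eta> e})) H"

lemma reverse_on_ends:
  assumes "\<forall>e\<in>H. card e = 2" "\<eta> \<in> orientations H" "e \<in> H"
  shows "e - {\<eta> e} = {reverse_on H \<eta> e}"
  using card_2_Diff_singleton[of e "\<eta> e"] assms orientationsD[OF assms(2)]
  unfolding reverse_on_def by simp

lemma reverse_on_neq:
  assumes "\<forall>e\<in>H. card e = 2" "\<eta> \<in> orientations H" "e \<in> H"
  shows "reverse_on H \<eta> e \<noteq> \<eta> e"
  using reverse_on_ends[OF assms] by blast

lemma reverse_on_orientations:
  assumes "\<forall>e\<in>H. card e = 2" "\<eta> \<in> orientations H"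
  shows "reverse_on H \<eta> \<in> orientations H"
  using reverse_on_ends[OF assms] unfolding orientations_def reverse_on_def by auto

lemma reverse_on_reverse_on:
  assumes "\<forall>e\<in>H. card e = 2" "\<eta> \<in> orientations H"
  shows "reverse_on H (reverse_on H \<eta>) = \<eta>"
proof
  fix e
  show "reverse_on H (reverse_on H \<eta>) e = \<eta> e"
  proof (cases "e \<in> H")
    case True
    have "e - {reverse_on H \<eta> e} = {reverse_on H (reverse_on H \<eta>) e}"
      using reverse_on_ends[OF assms(1) reverse_on_orientations[OF assms] True] .
    moreover have "e - {\<eta> e} = {reverse_on H \<eta> e}" "\<eta> e \<in> e"
      using reverse_on_ends[OF assms True] orientationsD[OF assms(2) True] by auto
    ultimately show ?thesis by blast
  qed (simp add: reverse_on_def orientations_undefined[OF assms(2)])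
qed

lemma indeg_reverse_on:
  assumes "\<forall>e\<in>H. card e = 2" "\<eta> \<in> orientations H" "finite H"
  shows "indeg H (reverse_on H \<eta>) v + indeg H \<eta> v = degree H v"
proof -
  have ends: "v \<in> e \<longleftrightarrow> reverse_on H \<eta> e = v \<or> \<eta> e = v" "reverse_on H \<eta> e \<noteq> \<eta> e"
    if "e \<in> H" for e
    using reverse_on_ends[OF assms(1,2) that] orientationsD[OF assms(2) that]
    by (metis Diff_iff insert_iff singleton_iff)+
  have "{e \<in> H. v \<in> e} = {e \<in> H. reverse_on H \<eta> e = v} \<union> {e \<in> H. \<eta> e = v}"
    using ends(1) by blast
  moreover have "{e \<in> H. reverse_on H \<eta> e = v} \<inter> {e \<in> H. \<eta> e = v} = {}"
    by (auto dest: ends(2))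
  ultimately show ?thesis
    unfolding indeg_def degree_def using assms(3) by (simp add: card_Un_disjoint)
qed

section \<open>Eulerian orientations exist\<close>

lemma degree_insert_triangle:
  assumes "finite F" "{v, u} \<notin> F" "{v, w} \<notin> F" "{u, w} \<notin> F" "u \<noteq> v" "w \<noteq> v" "u \<noteq> w"
  shows "degree (insert {v, u} (insert {v, w} (insert {u, w} F))) x
       = degree F x + (if x \<in> {u, v, w} then 2 else 0)"
  using assms by (auto simp: degree_insert doubleton_eq_iff)

lemma degree_insert_detour:
  assumes "finite F" "{v, u} \<notin> F" "{v, w} \<notin> F" "{u, w} \<notin> F" "u \<noteq> v" "w \<noteq> v" "u \<noteq> w"
  shows "degree (insert {v, u} (insert {v, w} F)) x = degree (insert {u, w} F) x + (if x = v then 2 else 0)"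
  using assms by (auto simp: degree_insert doubleton_eq_iff)

lemma eulerian_orientation_insert_triangle:
  assumes "finite F" "{v, u} \<notin> F" "{v, w} \<notin> F" "{u, w} \<notin> F" "u \<noteq> v" "w \<noteq> v" "u \<noteq> w"
    and "\<sigma> \<in> orientations F" "\<forall>x\<in>V. 2 * indeg F \<sigma> x = degree F x"
  shows "\<exists>\<sigma>'\<in>orientations (insert {v, u} (insert {v, w} (insert {u, w} F))).
           \<forall>x\<in>V. 2 * indeg (insert {v, u} (insert {v, w} (insert {u, w} F))) \<sigma>' x
                 = degree (insert {v, u} (insert {v, w} (insert {u, w} F))) x"
proof
  let ?\<sigma>' = "\<sigma>({u, w} := u, {v, w} := w, {v, u} := v)"
  show "?\<sigma>' \<in> orientations (insert {v, u} (insert {v, w} (insert {u, w} F)))"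
    using assms(8) unfolding orientations_def by (intro PiE_fun_upd) auto
  have "indeg F ?\<sigma>' x = indeg F \<sigma> x" for x
    using assms(2-4) by (intro indeg_cong) auto
  then show "\<forall>x\<in>V. 2 * indeg (insert {v, u} (insert {v, w} (insert {u, w} F))) ?\<sigma>' x
      = degree (insert {v, u} (insert {v, w} (insert {u, w} F))) x"
    using assms degree_insert_triangle[OF assms(1-7)]
    by (auto simp: indeg_insert doubleton_eq_iff)
qed

lemma eulerian_orientation_detour_directed:
  assumes "finite F" "{v, u} \<notin> F" "{v, w} \<notin> F" "{u, w} \<notin> F" "u \<noteq> v" "w \<noteq> v" "u \<noteq> w"
    and "\<sigma> \<in> orientations (insert {u, w} F)" "\<sigma> {u, w} = w"
    and "\<forall>x\<in>V. 2 * indeg (insert {u, w} F) \<sigma> x = degree (insert {u, w} F) x"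
  shows "\<exists>\<sigma>'\<in>orientations (insert {v, u} (insert {v, w} F)).
           \<forall>x\<in>V. 2 * indeg (insert {v, u} (insert {v, w} F)) \<sigma>' x = degree (insert {v, u} (insert {v, w} F)) x"
proof
  let ?\<sigma>' = "\<sigma>({u, w} := undefined, {v, w} := w, {v, u} := v)"
  show "?\<sigma>' \<in> orientations (insert {v, u} (insert {v, w} F))"
    using fun_upd_in_PiE[OF assms(4) assms(8)[unfolded orientations_def]]
    unfolding orientations_def by (intro PiE_fun_upd) auto
  have "indeg F ?\<sigma>' x = indeg F \<sigma> x" for x
    using assms(2-4) by (intro indeg_cong) auto
  then show "\<forall>x\<in>V. 2 * indeg (insert {v, u} (insert {v, w} F)) ?\<sigma>' x = degree (insert {v, u} (insert {v, w} F)) x"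
    using assms degree_insert_detour[OF assms(1-7)]
    by (auto simp: indeg_insert doubleton_eq_iff)
qed

lemma eulerian_orientation_detour:
  assumes "finite F" "{v, u} \<notin> F" "{v, w} \<notin> F" "{u, w} \<notin> F" "u \<noteq> v" "w \<noteq> v" "u \<noteq> w"
    and "\<sigma> \<in> orientations (insert {u, w} F)"
    and "\<forall>x\<in>V. 2 * indeg (insert {u, w} F) \<sigma> x = degree (insert {u, w} F) x"
  shows "\<exists>\<sigma>'\<in>orientations (insert {v, u} (insert {v, w} F)).
           \<forall>x\<in>V. 2 * indeg (insert {v, u} (insert {v, w} F)) \<sigma>' x = degree (insert {v, u} (insert {v, w} F)) x"
proof (cases "\<sigma> {u, w} = w")
  case True
  then show ?thesis
    using eulerian_orientation_detour_directed[OF assms(1-8) _ assms(9)] by blast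
next
  case False
  then have "\<sigma> {w, u} = u"
    using orientationsD[OF assms(8)] by (auto simp: insert_commute)
  moreover have "{u, w} = {w, u}" "insert {v, u} (insert {v, w} F) = insert {v, w} (insert {v, u} F)"
    by (auto simp: insert_commute)
  ultimately show ?thesis
    using eulerian_orientation_detour_directed[of F v w u \<sigma>] assms by auto
qed

lemma two_edges_at_a_vertex:
  assumes "simple_graph V E" "\<forall>v\<in>V. even (degree E v)" "E \<noteq> {}"
  obtains u v w where "{v, u} \<in> E" "{v, w} \<in> E" "u \<noteq> v" "w \<noteq> v" "u \<noteq> w"
proof -
  have edges: "\<forall>e\<in>E. e \<subseteq> V \<and> card e = 2"
    using assms(1) unfolding simple_graph_def by blast
  then obtain v u where vu: "{v, u} \<in> E" "u \<noteq> v"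
    using assms(3) card_2_iff by (metis ex_in_conv)
  then have "degree E v \<noteq> 0" "even (degree E v)"
    using simple_graph_finite_edges[OF assms(1)] assms(2) edges unfolding degree_def by auto
  then have "\<not> {e \<in> E. v \<in> e} \<subseteq> {{v, u}}"
    using card_mono[of "{{v, u}}" "{e \<in> E. v \<in> e}"] unfolding degree_def by fastforce
  then obtain e where e: "e \<in> E" "v \<in> e" "e \<noteq> {v, u}"
    by blast
  moreover obtain w where "e - {v} = {w}"
    using card_2_Diff_singleton[of e v] edges e by blast
  ultimately have "{v, w} \<in> E" "w \<noteq> v" "w \<noteq> u"
    by (metis Diff_iff insert_Diff insert_commute singletonI)+
  with vu show thesis
    using that by blast
qed

text \<open>
  For edges \<open>vu\<close> and \<open>vw\<close> at a common vertex, either remove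
  the triangle \<open>uvw\<close> (if \<open>uw\<close> is already an edge) or replace the path \<open>u\<close>--\<open>v\<close>--\<open>w\<close> by the
  edge \<open>uw\<close>; the graph has to stay simple, which is why the triangle case is needed.
\<close>
lemma eulerian_orientation_exists:
  assumes "simple_graph V E" "\<forall>v\<in>V. even (degree E v)"
  shows "\<exists>\<sigma>\<in>orientations E. \<forall>v\<in>V. 2 * indeg E \<sigma> v = degree E v"
  using assms
proof (induction "card E" arbitrary: E rule: less_induct)
  case less
  show ?case
  proof (cases "E = {}")
    case True
    then show ?thesis
      unfolding orientations_def indeg_def degree_def by auto
  next
    case False
    then obtain u v w where uvw: "{v, u} \<in> E" "{v, w} \<in> E" and distinct: "u \<noteq> v" "w \<noteq> v" "u \<noteq> w"
      using two_edges_at_a_vertex[OF less.prems] by blast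
    define F where "F = E - {{v, u}, {v, w}, {u, w}}"
    have F: "finite F" "{v, u} \<notin> F" "{v, w} \<notin> F" "{u, w} \<notin> F" "F \<subseteq> E"
      using simple_graph_finite_edges[OF less.prems(1)] unfolding F_def by auto
    show ?thesis
    proof (cases "{u, w} \<in> E")
      case True
      then have E: "E = insert {v, u} (insert {v, w} (insert {u, w} F))"
        using uvw unfolding F_def by auto
      have "card F < card E" "simple_graph V F" "\<forall>x\<in>V. even (degree F x)"
        using less.prems F distinct degree_insert_triangle[OF F(1-4) distinct]
        unfolding simple_graph_def E by (auto simp: finite_subset doubleton_eq_iff)
      then obtain \<sigma> where "\<sigma> \<in> orientations F" "\<forall>x\<in>V. 2 * indeg F \<sigma> x = degree F x"
        using less.hyps by blast
      then show ?thesis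
        unfolding E by (rule eulerian_orientation_insert_triangle[OF F(1-4) distinct])
    next
      case False
      then have E: "E = insert {v, u} (insert {v, w} F)"
        using uvw unfolding F_def by auto
      have "card (insert {u, w} F) < card E" "simple_graph V (insert {u, w} F)"
        "\<forall>x\<in>V. even (degree (insert {u, w} F) x)"
        using less.prems F distinct degree_insert_detour[OF F(1-4) distinct]
        unfolding simple_graph_def E by (auto simp: finite_subset doubleton_eq_iff)
      then obtain \<sigma> where "\<sigma> \<in> orientations (insert {u, w} F)"
        "\<forall>x\<in>V. 2 * indeg (insert {u, w} F) \<sigma> x = degree (insert {u, w} F) x"
        using less.hyps by blast
      then show ?thesis
        unfolding E by (rule eulerian_orientation_detour[OF F(1-4) distinct])
    qed
  qed
qed

section \<open>Counting pairs of orientations\<close>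

definition disagreement :: "'a set set \<Rightarrow> ('a set \<Rightarrow> 'a) \<Rightarrow> ('a set \<Rightarrow> 'a) \<Rightarrow> 'a set set" where
  "disagreement E \<sigma> \<rho> = {e \<in> E. \<sigma> e \<noteq> \<rho> e}"

definition differing_pair ::
    "'a set set \<Rightarrow> ('a set \<Rightarrow> 'a) \<Rightarrow> ('a set \<Rightarrow> 'a) \<Rightarrow> ('a set \<Rightarrow> 'a) \<times> ('a set \<Rightarrow> 'a)" where
  "differing_pair H \<omega> \<eta> = (override_on \<omega> \<eta> H, override_on \<omega> (reverse_on H \<eta>) H)"

lemma differing_pair_mem:
  assumes "\<forall>e\<in>E. card e = 2" "H \<subseteq> E" "\<omega> \<in> orientations (E - H)" "\<eta> \<in> orientations H"
  shows "differing_pair H \<omega> \<eta> \<in> {(\<sigma>, \<rho>) \<in> orientations E \<times> orientations E. disagreement E \<sigma> \<rho> = H}"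
proof -
  have two_ends: "\<forall>e\<in>H. card e = 2"
    using assms(1,2) by auto
  have "disagreement E (override_on \<omega> \<eta> H) (override_on \<omega> (reverse_on H \<eta>) H) = H"
    using assms(2) reverse_on_neq[OF two_ends assms(4), THEN not_sym]
    unfolding disagreement_def by (auto simp: override_on_def)
  then show ?thesis
    using assms reverse_on_orientations[OF two_ends assms(4)]
    by (simp add: differing_pair_def override_on_orientations)
qed

lemma restrict_differing_pair:
  assumes "\<omega> \<in> orientations (E - H)" "\<eta> \<in> orientations H"
  shows "(restrict (fst (differing_pair H \<omega> \<eta>)) (E - H), restrict (fst (differing_pair H \<omega> \<eta>)) H) = (\<omega>, \<eta>)"
  using orientations_undefined[OF assms(1)] orientations_undefined[OF assms(2)]
  unfolding differing_pair_def by fastforce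

lemma differing_pair_restrict:
  assumes "\<forall>e\<in>E. card e = 2" "\<sigma> \<in> orientations E" "\<rho> \<in> orientations E" "disagreement E \<sigma> \<rho> = H"
  shows "differing_pair H (restrict \<sigma> (E - H)) (restrict \<sigma> H) = (\<sigma>, \<rho>)"
proof -
  have H: "H = {e \<in> E. \<sigma> e \<noteq> \<rho> e}"
    using assms(4) unfolding disagreement_def by simp
  have "override_on (restrict \<sigma> (E - H)) (reverse_on H (restrict \<sigma> H)) H e = \<rho> e" for e
  proof (cases "e \<in> H")
    case True
    have "e - {\<sigma> e} = {reverse_on H (restrict \<sigma> H) e}"
      using reverse_on_ends[OF _ restrict_orientations[OF assms(2)] True] True assms(1) H by auto
    moreover have "\<rho> e \<in> e - {\<sigma> e}"
      using True H orientationsD[OF assms(3)] by auto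
    ultimately show ?thesis
      using True by simp
  next
    case False
    then show ?thesis
      using H orientations_undefined[OF assms(2)] orientations_undefined[OF assms(3)] by auto
  qed
  moreover have "override_on (restrict \<sigma> (E - H)) (restrict \<sigma> H) H = \<sigma>"
    using H orientations_undefined[OF assms(2)] by (auto simp: override_on_def)
  ultimately show ?thesis
    unfolding differing_pair_def by auto
qed

lemma bij_betw_differing_pair:
  assumes "\<forall>e\<in>E. card e = 2" "H \<subseteq> E"
  shows "bij_betw (case_prod (differing_pair H)) (orientations (E - H) \<times> orientations H)
           {(\<sigma>, \<rho>) \<in> orientations E \<times> orientations E. disagreement E \<sigma> \<rho> = H}"
proof (rule bij_betw_byWitness[where f' = "\<lambda>(\<sigma>, \<rho>). (restrict \<sigma> (E - H), restrict \<sigma> H)"])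
  show "case_prod (differing_pair H) ` (orientations (E - H) \<times> orientations H)
      \<subseteq> {(\<sigma>, \<rho>) \<in> orientations E \<times> orientations E. disagreement E \<sigma> \<rho> = H}"
  proof (rule image_subsetI)
    fix p
    assume "p \<in> orientations (E - H) \<times> orientations H"
    then show "case_prod (differing_pair H) p
        \<in> {(\<sigma>, \<rho>) \<in> orientations E \<times> orientations E. disagreement E \<sigma> \<rho> = H}"
      using differing_pair_mem[OF assms] by (cases p) simp
  qed
  show "(\<lambda>(\<sigma>, \<rho>). (restrict \<sigma> (E - H), restrict \<sigma> H)) `
      {(\<sigma>, \<rho>) \<in> orientations E \<times> orientations E. disagreement E \<sigma> \<rho> = H}
      \<subseteq> orientations (E - H) \<times> orientations H"
    by (auto simp: disagreement_def intro: restrict_orientations)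
qed (use restrict_differing_pair differing_pair_restrict[OF assms(1)] in \<open>auto simp: differing_pair_def\<close>)

lemma bij_betw_Int_preimage:
  assumes "bij_betw f A B" "\<And>x. x \<in> A \<Longrightarrow> f x \<in> C \<longleftrightarrow> x \<in> D"
  shows "bij_betw f (A \<inter> D) (B \<inter> C)"
proof (rule bij_betw_subset[OF assms(1)])
  show "f ` (A \<inter> D) = B \<inter> C"
    using assms bij_betw_imp_surj_on[OF assms(1)] by blast
qed auto

text \<open>In-degree \<open>d(v)/2 + b v\<close> at every \<open>v \<in> V\<close>, doubled so that odd degrees need no division.\<close>
definition excess_orientations :: "'a set \<Rightarrow> 'a set set \<Rightarrow> ('a \<Rightarrow> int) \<Rightarrow> ('a set \<Rightarrow> 'a) set" where
  "excess_orientations V E b =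
     {\<sigma> \<in> orientations E. \<forall>v\<in>V. 2 * int (indeg E \<sigma> v) = int (degree E v) + 2 * b v}"

lemma excess_orientations_subset: "excess_orientations V E b \<subseteq> orientations E"
  unfolding excess_orientations_def by auto

lemma finite_excess_orientations:
  "finite E \<Longrightarrow> \<forall>e\<in>E. card e = 2 \<Longrightarrow> finite (excess_orientations V E b)"
  using finite_orientations excess_orientations_subset card.infinite
  by (metis finite_subset zero_neq_numeral)

lemma card_excess_orientations_empty: "card (excess_orientations V {} (\<lambda>_. 0)) = 1"
proof -
  have "excess_orientations V {} (\<lambda>_. 0) = {\<lambda>_. undefined}"
    unfolding excess_orientations_def orientations_def indeg_def degree_def by auto
  then show ?thesis
    by simp
qed

lemma differing_pair_excess_orientations_iff:
  assumes "finite E" "\<forall>e\<in>E. card e = 2" "H \<subseteq> E"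
    and \<omega>: "\<omega> \<in> orientations (E - H)" and \<eta>: "\<eta> \<in> orientations H"
  shows "differing_pair H \<omega> \<eta> \<in> excess_orientations V E b \<times> excess_orientations V E (\<lambda>v. - b v)
     \<longleftrightarrow> (\<omega>, \<eta>) \<in> excess_orientations V (E - H) (\<lambda>_. 0) \<times> excess_orientations V H b"
proof -
  have "finite H" and two_ends: "\<forall>e\<in>H. card e = 2"
    using assms finite_subset by auto
  have pointwise:
    "(2 * int (indeg E (override_on \<omega> \<eta> H) v) = int (degree E v) + 2 * b v
      \<and> 2 * int (indeg E (override_on \<omega> (reverse_on H \<eta>) H) v) = int (degree E v) + 2 * - b v)
     \<longleftrightarrow> (2 * int (indeg (E - H) \<omega> v) = int (degree (E - H) v) + 2 * 0
      \<and> 2 * int (indeg H \<eta> v) = int (degree H v) + 2 * b v)" for v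
  proof -
    have "indeg H (reverse_on H \<eta>) v + indeg H \<eta> v = degree H v"
      using indeg_reverse_on[OF two_ends \<eta> \<open>finite H\<close>] .
    moreover have "indeg E (override_on \<omega> \<eta>' H) v = indeg (E - H) \<omega> v + indeg H \<eta>' v" for \<eta>'
      using indeg_override_on[OF assms(1,3)] .
    moreover have "degree E v = degree H v + degree (E - H) v"
      using degree_Diff[OF assms(1,3)] .
    ultimately show ?thesis
      by auto
  qed
  show ?thesis
    unfolding excess_orientations_def differing_pair_def
    using assms(3) \<omega> \<eta> reverse_on_orientations[OF two_ends \<eta>] pointwise
    by (auto simp: override_on_orientations)
qed

lemma card_excess_pairs_with_disagreement:
  assumes "finite E" "\<forall>e\<in>E. card e = 2" "H \<subseteq> E"
  shows "card {(\<sigma>, \<rho>) \<in> excess_orientations V E b \<times> excess_orientations V E (\<lambda>v. - b v).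
                disagreement E \<sigma> \<rho> = H}
       = card (excess_orientations V (E - H) (\<lambda>_. 0)) * card (excess_orientations V H b)"
proof -
  let ?A = "excess_orientations V (E - H) (\<lambda>_. 0) \<times> excess_orientations V H b"
  have "bij_betw (case_prod (differing_pair H)) ((orientations (E - H) \<times> orientations H) \<inter> ?A)
      ({(\<sigma>, \<rho>) \<in> orientations E \<times> orientations E. disagreement E \<sigma> \<rho> = H}
        \<inter> (excess_orientations V E b \<times> excess_orientations V E (\<lambda>v. - b v)))"
  proof (rule bij_betw_Int_preimage[OF bij_betw_differing_pair[OF assms(2,3)]])
    fix p
    assume "p \<in> orientations (E - H) \<times> orientations H"
    then show "case_prod (differing_pair H) p \<in> excess_orientations V E b \<times> excess_orientations V E (\<lambda>v. - b v)
        \<longleftrightarrow> p \<in> ?A"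
      using differing_pair_excess_orientations_iff[OF assms] by (cases p) simp
  qed
  moreover have "(orientations (E - H) \<times> orientations H) \<inter> ?A = ?A"
    using excess_orientations_subset by (intro Int_absorb1 Sigma_mono) auto
  moreover have "{(\<sigma>, \<rho>) \<in> orientations E \<times> orientations E. disagreement E \<sigma> \<rho> = H}
        \<inter> (excess_orientations V E b \<times> excess_orientations V E (\<lambda>v. - b v))
      = {(\<sigma>, \<rho>) \<in> excess_orientations V E b \<times> excess_orientations V E (\<lambda>v. - b v).
                disagreement E \<sigma> \<rho> = H}"
    using excess_orientations_subset by auto
  ultimately have "bij_betw (case_prod (differing_pair H)) ?A
      {(\<sigma>, \<rho>) \<in> excess_orientations V E b \<times> excess_orientations V E (\<lambda>v. - b v).
                disagreement E \<sigma> \<rho> = H}"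
    by simp
  then show ?thesis
    by (simp add: bij_betw_same_card[symmetric] card_cartesian_product)
qed

lemma card_excess_orientations_product:
  assumes "finite E" "\<forall>e\<in>E. card e = 2"
  shows "card (excess_orientations V E b) * card (excess_orientations V E (\<lambda>v. - b v))
       = (\<Sum>H\<in>Pow E. card (excess_orientations V (E - H) (\<lambda>_. 0)) * card (excess_orientations V H b))"
proof -
  let ?P = "excess_orientations V E b \<times> excess_orientations V E (\<lambda>v. - b v)"
  have "finite ?P"
    using finite_excess_orientations[OF assms] by simp
  moreover have "finite (Pow E)"
    using assms(1) by simp
  moreover have "case_prod (disagreement E) ` ?P \<subseteq> Pow E"
    unfolding disagreement_def by auto
  ultimately have "card ?P = (\<Sum>H\<in>Pow E. card {p \<in> ?P. case_prod (disagreement E) p = H})"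
    by (simp only: card_eq_sum sum.group)
  also have "\<dots> = (\<Sum>H\<in>Pow E. card {(\<sigma>, \<rho>) \<in> ?P. disagreement E \<sigma> \<rho> = H})"
    by (intro sum.cong refl arg_cong[where f = card]) auto
  also have "\<dots> = (\<Sum>H\<in>Pow E. card (excess_orientations V (E - H) (\<lambda>_. 0)) * card (excess_orientations V H b))"
    using card_excess_pairs_with_disagreement[OF assms] by (intro sum.cong) auto
  finally show ?thesis
    by (simp add: card_cartesian_product)
qed

lemma reverse_on_excess_orientations:
  assumes "finite E" "\<forall>e\<in>E. card e = 2" "\<sigma> \<in> excess_orientations V E b"
  shows "reverse_on E \<sigma> \<in> excess_orientations V E (\<lambda>v. - b v)"
proof -
  have \<sigma>: "\<sigma> \<in> orientations E"
    using assms(3) excess_orientations_subset by blast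
  have "int (indeg E (reverse_on E \<sigma>) v) + int (indeg E \<sigma> v) = int (degree E v)" for v
    using indeg_reverse_on[OF assms(2) \<sigma> assms(1)] by (metis of_nat_add)
  then show ?thesis
    using assms(3) reverse_on_orientations[OF assms(2) \<sigma>]
    unfolding excess_orientations_def by (smt (verit) mem_Collect_eq)
qed

lemma card_excess_orientations_uminus:
  assumes "finite E" "\<forall>e\<in>E. card e = 2"
  shows "card (excess_orientations V E (\<lambda>v. - b v)) = card (excess_orientations V E b)"
proof -
  have "bij_betw (reverse_on E) (excess_orientations V E b) (excess_orientations V E (\<lambda>v. - b v))"
  proof (rule bij_betw_byWitness[where f' = "reverse_on E"])
    show "reverse_on E ` excess_orientations V E b \<subseteq> excess_orientations V E (\<lambda>v. - b v)"
      using reverse_on_excess_orientations[OF assms] by blast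
    show "reverse_on E ` excess_orientations V E (\<lambda>v. - b v) \<subseteq> excess_orientations V E b"
      using reverse_on_excess_orientations[OF assms, of _ V "\<lambda>v. - b v"] by auto
  qed (use reverse_on_reverse_on[OF assms(2)] excess_orientations_subset in blast)+
  then show ?thesis
    by (simp add: bij_betw_same_card)
qed

lemma excess_orientations_zero:
  "excess_orientations V E (\<lambda>_. 0) = {\<sigma> \<in> orientations E. \<forall>v\<in>V. 2 * indeg E \<sigma> v = degree E v}"
proof -
  have "2 * int a = int b \<longleftrightarrow> 2 * a = b" for a b :: nat
    by linarith
  then show ?thesis
    unfolding excess_orientations_def by simp
qed

lemma card_excess_orientations_square:
  assumes "finite E" "\<forall>e\<in>E. card e = 2"
  shows "card (excess_orientations V E b) * card (excess_orientations V E b)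
       = card (excess_orientations V E b)
         + (\<Sum>H\<in>Pow E - {E}. card (excess_orientations V (E - H) (\<lambda>_. 0)) * card (excess_orientations V H b))"
proof -
  have "card (excess_orientations V E b) * card (excess_orientations V E b)
      = (\<Sum>H\<in>Pow E. card (excess_orientations V (E - H) (\<lambda>_. 0)) * card (excess_orientations V H b))"
    using card_excess_orientations_product[OF assms, of V b]
    unfolding card_excess_orientations_uminus[OF assms] .
  also have "\<dots> = card (excess_orientations V E b)
         + (\<Sum>H\<in>Pow E - {E}. card (excess_orientations V (E - H) (\<lambda>_. 0)) * card (excess_orientations V H b))"
    using assms(1) by (simp add: sum.remove[of "Pow E" E] card_excess_orientations_empty)
  finally show ?thesis .
qed

lemma le_of_mult_self_add_le:
  fixes p q :: nat
  assumes "p * p + q \<le> q * q + p" "1 \<le> q"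
  shows "p \<le> q"
proof (rule ccontr)
  assume "\<not> p \<le> q"
  then have "q + 1 \<le> p"
    by simp
  then have "(q + 1) * p \<le> p * p" "q * (q + 1) \<le> q * p"
    by (simp_all only: mult_le_mono1 mult_le_mono2)
  then show False
    using assms by (simp add: algebra_simps)
qed

lemma card_excess_orientations_le:
  assumes "simple_graph V E" "\<forall>v\<in>V. even (degree E v)"
  shows "card (excess_orientations V E b) \<le> card (excess_orientations V E (\<lambda>_. 0))"
  using assms
proof (induction "card E" arbitrary: E rule: less_induct)
  case less
  have fin: "finite E"
    using less.prems(1) by (rule simple_graph_finite_edges)
  have two_ends: "\<forall>e\<in>E. card e = 2"
    using less.prems(1) unfolding simple_graph_def by blast
  let ?N = "\<lambda>c H. card (excess_orientations V (E - H) (\<lambda>_. 0)) * card (excess_orientations V H c)"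
  have "?N b H \<le> ?N (\<lambda>_. 0) H" if H: "H \<in> Pow E - {E}" for H
  proof (cases "excess_orientations V (E - H) (\<lambda>_. 0) = {}")
    case False
    then obtain \<omega> where "\<forall>v\<in>V. 2 * indeg (E - H) \<omega> v = degree (E - H) v"
      by (auto simp: excess_orientations_zero)
    then have "\<forall>v\<in>V. even (degree H v)"
      using less.prems(2) degree_Diff[OF fin, of H] H by (metis DiffD1 PowD dvd_add_left_iff dvd_triv_left)
    moreover have "card H < card E"
      using H fin by (intro psubset_card_mono) auto
    moreover have "simple_graph V H"
      using H less.prems(1) unfolding simple_graph_def by auto
    ultimately show ?thesis
      using less.hyps by simp
  qed simp
  then have "(\<Sum>H\<in>Pow E - {E}. ?N b H) \<le> (\<Sum>H\<in>Pow E - {E}. ?N (\<lambda>_. 0) H)"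
    by (rule sum_mono)
  then have "card (excess_orientations V E b) * card (excess_orientations V E b)
        + card (excess_orientations V E (\<lambda>_. 0))
      \<le> card (excess_orientations V E (\<lambda>_. 0)) * card (excess_orientations V E (\<lambda>_. 0))
        + card (excess_orientations V E b)"
    unfolding card_excess_orientations_square[OF fin two_ends] by linarith
  moreover have "excess_orientations V E (\<lambda>_. 0) \<noteq> {}"
    using eulerian_orientation_exists[OF less.prems] by (auto simp: excess_orientations_zero)
  then have "1 \<le> card (excess_orientations V E (\<lambda>_. 0))"
    using finite_excess_orientations[OF fin two_ends] by (simp add: Suc_le_eq card_gt_0_iff)
  ultimately show ?case
    by (rule le_of_mult_self_add_le)
qed

theorem theorem1p11:
  fixes V :: "'a set" and E :: "'a set set" and r :: "'a \<Rightarrow> int"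
  assumes "simple_graph V E"
    and "\<forall>v\<in>V. even (degree E v)"
  shows "eps_r V E r \<le> eps V E"
proof -
  have "{\<sigma> \<in> orientations E. \<forall>v\<in>V. int (indeg E \<sigma> v) = r v}
      = excess_orientations V E (\<lambda>v. r v - int (degree E v) div 2)"
    using assms(2) unfolding excess_orientations_def by (auto elim!: evenE)
  then show ?thesis
    unfolding eps_r_def eps_def excess_orientations_zero[symmetric]
    using card_excess_orientations_le[OF assms] by simp
qed

end
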